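(* Let $\mathcal{G}^2_6$ be the $3$-graph on $[6]$ whose edges are all $3$-subsets of $[6]$ except $\{1,2,3\},\{1,2,6\},\{3,4,5\},\{4,5,6\}$. Then $\lambda(\mathcal{G}^2_6)\le 2/27$.
   Context: For a $3$-graph $\mathcal{T}$ on $[s]$, $p_{\mathcal{T}}(x)=\sum_{E\in\mathcal{T}}\prod_{i\in E}x_i$ and the Lagrangian is $\lambda(\mathcal{T})=\max\{p_{\mathcal{T}}(x): x\in\mathbb{R}^s,\ x_i\ge0,\ \sum_i x_i=1\}$. *)

theory Defs
  imports Complex_Main
begin

text \<open>A 3-graph on [s] = {1..s} is a set of 3-element subsets of {1..s}.
  Points x are functions nat => real; only coordinates 1..s matter.\<close>

definition lag_poly :: "nat set set \<Rightarrow> (nat \<Rightarrow> real) \<Rightarrow> real" where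
  "lag_poly T x = (\<Sum>E\<in>T. \<Prod>i\<in>E. x i)"

definition std_simplex :: "nat \<Rightarrow> (nat \<Rightarrow> real) set" where
  "std_simplex s = {x. (\<forall>i\<in>{1..s}. x i \<ge> 0) \<and> (\<Sum>i=1..s. x i) = 1 \<and> (\<forall>i. i \<notin> {1..s} \<longrightarrow> x i = 0)}"

definition lagrangian :: "nat \<Rightarrow> nat set set \<Rightarrow> real" where
  "lagrangian s T = (SUP x\<in>std_simplex s. lag_poly T x)"

definition G26 :: "nat set set" where
  "G26 = {E. E \<subseteq> {1..6} \<and> card E = 3} - {{1,2,3},{1,2,6},{3,4,5},{4,5,6}}"

end

theory Submission
  imports Defs
begin

text \<open>The vertices of G26 fall into the pairs {1,2}, {4,5}, {3,6}. With pair weights a, b, c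
  (so a + b + c = 1) the edges are: one vertex from each pair, the pair {3,6} with a vertex of
  {1,2,4,5}, the pair {1,2} with a vertex of {4,5}, and the pair {4,5} with a vertex of {1,2}.
  Bounding each product of a pair by a quarter of the square of its weight, and then ab by
  (a+b)^2/4, leaves the one-variable function t(2-t)^2/16 of t = a + b, whose maximum on [0,1]
  is 2/27.\<close>

lemma sorted_list_of_set_triple:
  fixes i j k :: "'a::linorder"
  assumes "i < j" "j < k"
  shows "sorted_list_of_set {i, j, k} = [i, j, k]"
  using assms by (subst sorted_list_of_set_unique [symmetric]) (auto simp: card_insert_if)

lemma card_3_iff_increasing:
  fixes E :: "'a::linorder set"
  shows "card E = 3 \<longleftrightarrow> (\<exists>i j k. i < j \<and> j < k \<and> E = {i, j, k})"
proof
  assume card: "card E = 3"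
  then have "finite E" by (intro card_ge_0_finite) simp
  moreover have "length (sorted_list_of_set E) = 3"
    using card by simp
  then obtain i j k where "sorted_list_of_set E = [i, j, k]"
    by (metis length_0_conv length_Suc_conv numeral_3_eq_3)
  ultimately show "\<exists>i j k. i < j \<and> j < k \<and> E = {i, j, k}"
    using strict_sorted_list_of_set[of E] set_sorted_list_of_set[of E] by auto
qed (auto simp: card_insert_if)

definition set_of_triple :: "'a \<times> 'a \<times> 'a \<Rightarrow> 'a set" where
  "set_of_triple = (\<lambda>(i, j, k). {i, j, k})"

definition increasing_triples :: "'a::linorder set \<Rightarrow> ('a \<times> 'a \<times> 'a) set" where
  "increasing_triples A = {(i, j, k). i < j \<and> j < k \<and> {i, j, k} \<subseteq> A}"

lemma inj_on_set_of_triple: "inj_on set_of_triple (increasing_triples A)"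
proof (rule inj_onI, clarsimp simp: increasing_triples_def set_of_triple_def)
  fix i j k a b c :: 'a
  assume "{i, j, k} = {a, b, c}" "i < j" "j < k" "a < b" "b < c"
  then show "i = a \<and> j = b \<and> k = c"
    by (metis sorted_list_of_set_triple list.inject)
qed

lemma three_subsets_eq_image:
  "{E. E \<subseteq> A \<and> card E = 3} = set_of_triple ` increasing_triples A"
  by (auto simp: card_3_iff_increasing set_of_triple_def increasing_triples_def)

lemma lag_poly_image_increasing_triples:
  assumes "T \<subseteq> increasing_triples A"
  shows "lag_poly (set_of_triple ` T) x = (\<Sum>(i, j, k)\<in>T. x i * x j * x k)"
proof -
  have "inj_on set_of_triple T"
    using inj_on_set_of_triple assms by (rule inj_on_subset)
  then have "lag_poly (set_of_triple ` T) x = (\<Sum>t\<in>T. \<Prod>i\<in>set_of_triple t. x i)"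
    unfolding lag_poly_def by (simp add: sum.reindex)
  also have "\<dots> = (\<Sum>(i, j, k)\<in>T. x i * x j * x k)"
    using assms by (intro sum.cong) (auto simp: set_of_triple_def increasing_triples_def)
  finally show ?thesis .
qed

lemma increasing_triples_1_6:
  "increasing_triples {1..6::nat} =
     {(1,2,3), (1,2,4), (1,2,5), (1,2,6), (1,3,4), (1,3,5), (1,3,6), (1,4,5), (1,4,6), (1,5,6),
      (2,3,4), (2,3,5), (2,3,6), (2,4,5), (2,4,6), (2,5,6), (3,4,5), (3,4,6), (3,5,6), (4,5,6)}"
proof (intro set_eqI iffI)
  fix t assume "t \<in> increasing_triples {1..6::nat}"
  then obtain i j k where ijk: "t = (i, j, k)" "i < j" "j < k" "1 \<le> i" "k \<le> 6"
    by (auto simp: increasing_triples_def)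
  moreover have "i = 1 \<or> i = 2 \<or> i = 3 \<or> i = 4" "j = 2 \<or> j = 3 \<or> j = 4 \<or> j = 5"
    "k = 3 \<or> k = 4 \<or> k = 5 \<or> k = 6"
    using ijk by arith+
  ultimately show "t \<in> {(1,2,3), (1,2,4), (1,2,5), (1,2,6), (1,3,4), (1,3,5), (1,3,6), (1,4,5), (1,4,6),
      (1,5,6), (2,3,4), (2,3,5), (2,3,6), (2,4,5), (2,4,6), (2,5,6), (3,4,5), (3,4,6), (3,5,6), (4,5,6)}"
    by (elim disjE) simp_all
qed (auto simp: increasing_triples_def)

lemma G26_eq_image:
  "G26 = set_of_triple ` (increasing_triples {1..6} - {(1,2,3), (1,2,6), (3,4,5), (4,5,6)})"
  (is "_ = set_of_triple ` (?T - ?F)")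
proof -
  have "set_of_triple ` (?T - ?F) = set_of_triple ` ?T - set_of_triple ` ?F"
    by (rule inj_on_image_set_diff[OF inj_on_set_of_triple]) (auto simp: increasing_triples_def)
  then show ?thesis
    by (simp add: G26_def three_subsets_eq_image set_of_triple_def)
qed

lemma lag_poly_G26:
  "lag_poly G26 x =
     (x 1 + x 2) * (x 4 + x 5) * (x 3 + x 6) + x 3 * x 6 * ((x 1 + x 2) + (x 4 + x 5))
     + x 1 * x 2 * (x 4 + x 5) + x 4 * x 5 * (x 1 + x 2)"
  (is "_ = ?p")
proof -
  have "lag_poly G26 x = (\<Sum>(i, j, k)\<in>increasing_triples {1..6} - {(1,2,3), (1,2,6), (3,4,5), (4,5,6)}.
      x i * x j * x k)"
    unfolding G26_eq_image by (rule lag_poly_image_increasing_triples) blast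
  also have "\<dots> = ?p"
    unfolding increasing_triples_1_6 by (simp add: insert_Diff_if algebra_simps)
  finally show ?thesis .
qed

lemma product_le_quarter_square_sum:
  fixes u v :: "'a::linordered_field"
  shows "u * v \<le> (u + v)\<^sup>2 / 4"
  using zero_le_square[of "u - v"] by (simp add: power2_eq_square algebra_simps)

lemma paired_cubic_form_le:
  fixes a b c u v w :: real
  assumes nonneg: "a \<ge> 0" "b \<ge> 0" "c \<ge> 0" and sum: "a + b + c = 1"
    and u: "u \<le> a\<^sup>2 / 4" and v: "v \<le> b\<^sup>2 / 4" and w: "w \<le> c\<^sup>2 / 4"
  shows "a * b * c + w * (a + b) + u * b + v * a \<le> 2 / 27"
proof -
  define t where "t = a + b"
  have t: "0 \<le> t" "t \<le> 1" and c: "c = 1 - t"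
    using nonneg sum by (auto simp: t_def)
  have "a * b * c + w * (a + b) + u * b + v * a \<le> a * b * c + c\<^sup>2 / 4 * (a + b) + a\<^sup>2 / 4 * b + b\<^sup>2 / 4 * a"
    using nonneg u v w by (intro add_mono mult_right_mono) auto
  also have "\<dots> = a * b * (c + t / 4) + t * c\<^sup>2 / 4"
    by (simp add: t_def algebra_simps power2_eq_square)
  also have "\<dots> \<le> t\<^sup>2 / 4 * (c + t / 4) + t * c\<^sup>2 / 4"
    using product_le_quarter_square_sum[of a b] nonneg t
    by (intro add_mono mult_right_mono) (auto simp: t_def)
  also have "\<dots> = t * (2 - t)\<^sup>2 / 16"
    by (simp add: c field_simps power2_eq_square)
  also have "\<dots> \<le> 2 / 27"
    \<comment> \<open>2/27 - t(2-t)^2/16 = (3t-2)^2 (8-3t) / 432\<close>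
  proof -
    have "0 \<le> (3 * t - 2)\<^sup>2 * (8 - 3 * t)"
      using t by simp
    then show ?thesis
      by (simp add: algebra_simps power2_eq_square)
  qed
  finally show ?thesis .
qed

lemma std_simplex_vertex:
  assumes "s \<ge> 1"
  shows "(\<lambda>i. if i = 1 then 1 else 0) \<in> std_simplex s"
  using assms by (simp add: std_simplex_def)

lemma lagrangian_le:
  assumes "s \<ge> 1" and "\<And>x. x \<in> std_simplex s \<Longrightarrow> lag_poly T x \<le> c"
  shows "lagrangian s T \<le> c"
  unfolding lagrangian_def using std_simplex_vertex[OF assms(1)] assms(2)
  by (intro cSUP_least) auto

theorem lemma4p2:
  shows "lagrangian 6 G26 \<le> 2 / 27"
proof (rule lagrangian_le)
  fix x assume "x \<in> std_simplex 6"
  then have nonneg: "\<forall>i\<in>{1..6}. x i \<ge> 0" and "(\<Sum>i=1..6. x i) = 1"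
    by (auto simp: std_simplex_def)
  then have sum: "(x 1 + x 2) + (x 4 + x 5) + (x 3 + x 6) = 1"
    by (simp add: sum.atLeast_Suc_atMost numeral_eq_Suc)
  show "lag_poly G26 x \<le> 2 / 27"
    unfolding lag_poly_G26 using nonneg sum
    by (intro paired_cubic_form_le product_le_quarter_square_sum) auto
qed simp

end
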